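(* Let $\{G^i\}_{i\in I}$ be a finite family of games over the same graph $\Gamma=(V,E)$ such that each $G^i$ has a nonempty set of Nash equilibria, and let $C,D\subseteq V$. Then $\prod_{i\in I}G^i\vDash C\rhd D$ if and only if $G^i\vDash C\rhd D$ for each $i\in I$.
   Context: A game over a finite simple undirected graph $\Gamma=(V,E)$ is a strategic game $(V,\{S_v\}_{v\in V},\{u_v\}_{v\in V})$ with player set $V$, finite strategy sets, and real pay-off functions $u_v$ depending only on the strategies of $v$ and its neighbours. $NE(G)$ is the set of pure Nash equilibria. For profiles $\mathbf s,\mathbf t$ and $X\subseteq V$, $\mathbf s=_X\mathbf t$ means they agree on every player of $X$; $G\vDash C\rhd D$ means for all $\mathbf s,\mathbf t\in NE(G)$, $\mathbf s=_C\mathbf t$ implies $\mathbf s=_D\mathbf t$. If $G^i=(V,\{S^i_v\},\{u^i_v\})$, the product $\prod_{i\in I}G^i$ is the game with player set $V$, strategy sets $S_v=\prod_{i\in I}S^i_v$, and pay-offs $u_v=\sum_{i\in I}u^i_v$ (each $u^i_v$ evaluated at the $i$-th components of the profile). *)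

theory Defs
  imports Complex_Main "HOL-Library.FuncSet"
begin

definition simple_graph :: "'v set \<Rightarrow> ('v \<Rightarrow> 'v \<Rightarrow> bool) \<Rightarrow> bool" where
  "simple_graph V E \<longleftrightarrow> finite V \<and> (\<forall>v w. E v w \<longrightarrow> v \<in> V \<and> w \<in> V)
     \<and> (\<forall>v w. E v w \<longrightarrow> E w v) \<and> (\<forall>v. \<not> E v v)"

definition game_over :: "'v set \<Rightarrow> ('v \<Rightarrow> 'v \<Rightarrow> bool) \<Rightarrow> ('v \<Rightarrow> 's set)
    \<Rightarrow> ('v \<Rightarrow> ('v \<Rightarrow> 's) \<Rightarrow> real) \<Rightarrow> bool" where
  "game_over V E S u \<longleftrightarrow> simple_graph V E \<and> (\<forall>v\<in>V. finite (S v)) \<and>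
     (\<forall>v\<in>V. \<forall>s\<in>PiE V S. \<forall>t\<in>PiE V S.
        (\<forall>w\<in>V. (w = v \<or> E v w) \<longrightarrow> s w = t w) \<longrightarrow> u v s = u v t)"

definition NE :: "'v set \<Rightarrow> ('v \<Rightarrow> 's set) \<Rightarrow> ('v \<Rightarrow> ('v \<Rightarrow> 's) \<Rightarrow> real)
    \<Rightarrow> ('v \<Rightarrow> 's) set" where
  "NE V S u = {s \<in> PiE V S. \<forall>v\<in>V. \<forall>x\<in>S v. u v (s(v := x)) \<le> u v s}"

definition entails :: "'v set \<Rightarrow> ('v \<Rightarrow> 's set) \<Rightarrow> ('v \<Rightarrow> ('v \<Rightarrow> 's) \<Rightarrow> real)
    \<Rightarrow> 'v set \<Rightarrow> 'v set \<Rightarrow> bool" where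
  "entails V S u C D \<longleftrightarrow> (\<forall>s\<in>NE V S u. \<forall>t\<in>NE V S u.
      (\<forall>c\<in>C. s c = t c) \<longrightarrow> (\<forall>d\<in>D. s d = t d))"

definition prod_strats :: "'i set \<Rightarrow> ('i \<Rightarrow> 'v \<Rightarrow> 's set) \<Rightarrow> 'v \<Rightarrow> ('i \<Rightarrow> 's) set" where
  "prod_strats I S v = PiE I (\<lambda>i. S i v)"

definition prod_payoff :: "'i set \<Rightarrow> 'v set \<Rightarrow> ('i \<Rightarrow> 'v \<Rightarrow> ('v \<Rightarrow> 's) \<Rightarrow> real)
    \<Rightarrow> 'v \<Rightarrow> ('v \<Rightarrow> ('i \<Rightarrow> 's)) \<Rightarrow> real" where
  "prod_payoff I V u v s = (\<Sum>i\<in>I. u i v (\<lambda>w\<in>V. s w i))"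

end

theory Submission
  imports Defs
begin

text \<open>A unilateral deviation in the product is a simultaneous
  unilateral deviation of the same player in every factor, so a product profile is an
  equilibrium exactly when all its components are; a deviation in a single factor is the
  special case that leaves the other components fixed. Hence equilibria of the product are
  precisely the families of equilibria of the factors. Given this, \<open>C \<rhd> D\<close> transfers from
  the factors to the product componentwise; conversely, two equilibria of one factor are
  compared by completing both with the same fixed equilibria of the other factors, which is
  where non-emptiness of every \<open>NE(G\<^sup>i)\<close> is needed.\<close>

definition component :: "'v set \<Rightarrow> ('v \<Rightarrow> 'i \<Rightarrow> 's) \<Rightarrow> 'i \<Rightarrow> 'v \<Rightarrow> 's" where
  "component V s i = (\<lambda>w\<in>V. s w i)"

definition tuple :: "'v set \<Rightarrow> 'i set \<Rightarrow> ('i \<Rightarrow> 'v \<Rightarrow> 's) \<Rightarrow> 'v \<Rightarrow> 'i \<Rightarrow> 's" where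
  "tuple V I p = (\<lambda>w\<in>V. \<lambda>j\<in>I. p j w)"

lemma entailsD:
  "entails V S u C D \<Longrightarrow> s \<in> NE V S u \<Longrightarrow> t \<in> NE V S u \<Longrightarrow> \<forall>c\<in>C. s c = t c
    \<Longrightarrow> d \<in> D \<Longrightarrow> s d = t d"
  unfolding entails_def by blast

lemma prod_payoff_eq_sum_component:
  "prod_payoff I V u v s = (\<Sum>i\<in>I. u i v (component V s i))"
  by (simp add: prod_payoff_def component_def)

lemma component_fun_upd:
  "v \<in> V \<Longrightarrow> component V (s(v := x)) i = (component V s i)(v := x i)"
  by (auto simp: component_def fun_eq_iff)

lemma component_in_PiE:
  "s \<in> PiE V (prod_strats I S) \<Longrightarrow> i \<in> I \<Longrightarrow> component V s i \<in> PiE V (S i)"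
  by (auto simp: component_def prod_strats_def PiE_iff)

lemma component_tuple:
  assumes "j \<in> I" and "p j \<in> extensional V"
  shows "component V (tuple V I p) j = p j"
  using assms by (auto simp: component_def tuple_def fun_eq_iff extensional_def)

lemma tuple_in_PiE:
  "(\<And>j. j \<in> I \<Longrightarrow> p j \<in> PiE V (S j)) \<Longrightarrow> tuple V I p \<in> PiE V (prod_strats I S)"
  by (auto simp: tuple_def prod_strats_def PiE_iff)

lemma PiE_prod_strats_eq_iff:
  assumes "s \<in> PiE V (prod_strats I S)" and "t \<in> PiE V (prod_strats I S)" and "d \<in> V"
  shows "s d = t d \<longleftrightarrow> (\<forall>i\<in>I. component V s i d = component V t i d)"
proof -
  have "s d \<in> prod_strats I S d" "t d \<in> prod_strats I S d"
    using assms by auto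
  then have "s d \<in> PiE I (\<lambda>i. S i d)" "t d \<in> PiE I (\<lambda>i. S i d)"
    unfolding prod_strats_def .
  then show ?thesis
    using \<open>d \<in> V\<close> by (auto simp: component_def intro: PiE_ext)
qed

lemma sum_diff_single_term:
  fixes f g :: "'a \<Rightarrow> 'b::ab_group_add"
  assumes "finite I" and "i \<in> I" and "\<And>j. j \<in> I \<Longrightarrow> j \<noteq> i \<Longrightarrow> f j = g j"
  shows "sum f I - sum g I = f i - g i"
proof -
  have "sum f I - sum g I = (\<Sum>j\<in>I. if j = i then f i - g i else 0)"
    unfolding sum_subtractf[symmetric] using assms(3) by (intro sum.cong) auto
  also have "\<dots> = f i - g i"
    using assms(1,2) by simp
  finally show ?thesis .
qed

lemma component_NE_if_NE_prod:
  assumes "finite I" and s: "s \<in> NE V (prod_strats I S) (prod_payoff I V u)" and "i \<in> I"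
  shows "component V s i \<in> NE V (S i) (u i)"
  unfolding NE_def
proof (intro CollectI conjI ballI)
  have sP: "s \<in> PiE V (prod_strats I S)"
    using s by (simp add: NE_def)
  then show "component V s i \<in> PiE V (S i)"
    using \<open>i \<in> I\<close> by (rule component_in_PiE)
  fix v y assume "v \<in> V" and "y \<in> S i v"
  define x where "x = (s v)(i := y)"
  have "s v \<in> PiE I (\<lambda>j. S j v)"
    using PiE_mem[OF sP \<open>v \<in> V\<close>] unfolding prod_strats_def .
  from PiE_fun_upd[OF \<open>y \<in> S i v\<close> this] have "x \<in> prod_strats I S v"
    using \<open>i \<in> I\<close> by (simp add: x_def prod_strats_def insert_absorb)
  then have "prod_payoff I V u v (s(v := x)) - prod_payoff I V u v s \<le> 0"
    using s \<open>v \<in> V\<close> by (simp add: NE_def)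
  also have "prod_payoff I V u v (s(v := x)) - prod_payoff I V u v s
      = u i v (component V (s(v := x)) i) - u i v (component V s i)"
    unfolding prod_payoff_eq_sum_component using \<open>finite I\<close> \<open>i \<in> I\<close>
  proof (rule sum_diff_single_term)
    fix j assume "j \<noteq> i"
    then have "component V (s(v := x)) j = component V s j"
      by (auto simp: component_def x_def fun_eq_iff)
    then show "u j v (component V (s(v := x)) j) = u j v (component V s j)"
      by simp
  qed
  finally show "u i v ((component V s i)(v := y)) \<le> u i v (component V s i)"
    using \<open>v \<in> V\<close> by (simp add: component_fun_upd x_def)
qed

lemma NE_prod_if_component_NE:
  assumes "s \<in> PiE V (prod_strats I S)" and "\<And>i. i \<in> I \<Longrightarrow> component V s i \<in> NE V (S i) (u i)"
  shows "s \<in> NE V (prod_strats I S) (prod_payoff I V u)"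
  unfolding NE_def
proof (intro CollectI conjI ballI)
  show "s \<in> PiE V (prod_strats I S)"
    by fact
  fix v x assume "v \<in> V" and x: "x \<in> prod_strats I S v"
  have "u i v (component V (s(v := x)) i) \<le> u i v (component V s i)" if "i \<in> I" for i
  proof -
    have "x i \<in> S i v"
      using x \<open>i \<in> I\<close> by (auto simp: prod_strats_def)
    then show ?thesis
      using assms(2)[OF \<open>i \<in> I\<close>] \<open>v \<in> V\<close> by (simp add: NE_def component_fun_upd)
  qed
  then show "prod_payoff I V u v (s(v := x)) \<le> prod_payoff I V u v s"
    unfolding prod_payoff_eq_sum_component by (rule sum_mono)
qed

lemma entails_prod_if_entails_factors:
  assumes "finite I" and R: "\<forall>i\<in>I. entails V (S i) (u i) C D" and "C \<subseteq> V" and "D \<subseteq> V"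
  shows "entails V (prod_strats I S) (prod_payoff I V u) C D"
  unfolding entails_def
proof (intro ballI impI)
  fix s t d
  assume s: "s \<in> NE V (prod_strats I S) (prod_payoff I V u)"
    and t: "t \<in> NE V (prod_strats I S) (prod_payoff I V u)"
    and agree: "\<forall>c\<in>C. s c = t c" and "d \<in> D"
  have components_agree: "component V s i d = component V t i d" if "i \<in> I" for i
  proof -
    have "\<forall>c\<in>C. component V s i c = component V t i c"
      using agree \<open>C \<subseteq> V\<close> by (auto simp: component_def)
    moreover have "entails V (S i) (u i) C D"
      using R \<open>i \<in> I\<close> by blast
    ultimately show ?thesis
      using component_NE_if_NE_prod[OF \<open>finite I\<close> s \<open>i \<in> I\<close>]
        component_NE_if_NE_prod[OF \<open>finite I\<close> t \<open>i \<in> I\<close>] \<open>d \<in> D\<close>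
      by (blast intro: entailsD)
  qed
  have "s \<in> PiE V (prod_strats I S)" "t \<in> PiE V (prod_strats I S)" and "d \<in> V"
    using s t \<open>d \<in> D\<close> \<open>D \<subseteq> V\<close> unfolding NE_def by auto
  from PiE_prod_strats_eq_iff[OF this] components_agree show "s d = t d"
    by blast
qed

lemma entails_factor_if_entails_prod:
  assumes L: "entails V (prod_strats I S) (prod_payoff I V u) C D"
    and nonempty: "\<forall>j\<in>I. NE V (S j) (u j) \<noteq> {}" and "C \<subseteq> V" and "D \<subseteq> V" and "i \<in> I"
  shows "entails V (S i) (u i) C D"
  unfolding entails_def
proof (intro ballI impI)
  obtain e where e: "\<And>j. j \<in> I \<Longrightarrow> e j \<in> NE V (S j) (u j)"
    using bchoice[of I "\<lambda>j p. p \<in> NE V (S j) (u j)"] nonempty by blast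
  define embed where "embed p = tuple V I (e(i := p))" for p
  have embed_NE: "embed p \<in> NE V (prod_strats I S) (prod_payoff I V u)"
    if p: "p \<in> NE V (S i) (u i)" for p
  proof -
    have NE_factors: "(e(i := p)) j \<in> NE V (S j) (u j)" if "j \<in> I" for j
      using p e \<open>j \<in> I\<close> by simp
    then have "(e(i := p)) j \<in> PiE V (S j)" if "j \<in> I" for j
      using that by (simp add: NE_def)
    then show ?thesis
      unfolding embed_def using NE_factors
      by (intro NE_prod_if_component_NE tuple_in_PiE) (auto simp: component_tuple PiE_iff)
  qed
  fix s t d
  assume "s \<in> NE V (S i) (u i)" and "t \<in> NE V (S i) (u i)"
    and agree: "\<forall>c\<in>C. s c = t c" and "d \<in> D"
  have "\<forall>c\<in>C. embed s c = embed t c"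
    using agree \<open>C \<subseteq> V\<close> by (auto simp: embed_def tuple_def)
  then have "embed s d = embed t d"
    using \<open>s \<in> NE V (S i) (u i)\<close> \<open>t \<in> NE V (S i) (u i)\<close>
    by (intro entailsD[OF L _ _ _ \<open>d \<in> D\<close>] embed_NE)
  then have "embed s d i = embed t d i"
    by simp
  then show "s d = t d"
    using \<open>d \<in> D\<close> \<open>D \<subseteq> V\<close> \<open>i \<in> I\<close> by (auto simp: embed_def tuple_def)
qed

theorem lemma19:
  fixes I :: "'i set" and V :: "'v set" and E :: "'v \<Rightarrow> 'v \<Rightarrow> bool"
    and S :: "'i \<Rightarrow> 'v \<Rightarrow> 's set" and u :: "'i \<Rightarrow> 'v \<Rightarrow> ('v \<Rightarrow> 's) \<Rightarrow> real"
    and C D :: "'v set"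
  assumes "finite I"
    and "\<forall>i\<in>I. game_over V E (S i) (u i)"
    and "\<forall>i\<in>I. NE V (S i) (u i) \<noteq> {}"
    and "C \<subseteq> V" and "D \<subseteq> V"
  shows "entails V (prod_strats I S) (prod_payoff I V u) C D
     \<longleftrightarrow> (\<forall>i\<in>I. entails V (S i) (u i) C D)"
  using entails_prod_if_entails_factors[OF assms(1) _ assms(4,5)]
    entails_factor_if_entails_prod[OF _ assms(3-5)]
  by blast

end
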